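(* Let $\Delta\subset\mathbb{R}^2$ be a lattice polygon with $\operatorname{lw}(\Delta)=d>0$. Let $P$ be a vertex of $\Delta$ and let $v\in\mathbb{Z}^2$ be a primitive vector. If $\operatorname{lw}_v(\Delta_P)<d$ and $\operatorname{lw}_v(\Delta_P)<\operatorname{lw}_v(\Delta)-1$, then $\Delta$ is unimodularly equivalent to $\Upsilon_{d-1}:=\operatorname{conv}\{(0,0),(1,d),(d,1)\}$.
   Context: A lattice polygon is the convex hull of a finite non-empty set of points of $\mathbb{Z}^2$. For a lattice polygon $\Delta$ and a non-zero primitive $v\in\mathbb{Z}^2$, $\operatorname{lw}_v(\Delta)=\max_{Q\in\Delta}\langle Q,v\rangle-\min_{Q\in\Delta}\langle Q,v\rangle$, and $\operatorname{lw}(\Delta)=\min_v\operatorname{lw}_v(\Delta)$ over all non-zero primitive $v\in\mathbb{Z}^2$. For a vertex $P$ of $\Delta$, $\Delta_P:=\operatorname{conv}((\Delta\cap\mathbb{Z}^2)\setminus\{P\})$. Two lattice polygons are (unimodularly) equivalent if one is the image of the other under a map $x\mapsto Ax+b$ with $A\in\mathrm{GL}_2(\mathbb{Z})$, $b\in\mathbb{Z}^2$. *)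

theory Defs
  imports "HOL-Analysis.Analysis"
begin

definition lattice_pt :: "real \<times> real \<Rightarrow> bool" where
  "lattice_pt x \<longleftrightarrow> fst x \<in> \<int> \<and> snd x \<in> \<int>"

definition lattice_polygon :: "(real \<times> real) set \<Rightarrow> bool" where
  "lattice_polygon D \<longleftrightarrow>
     (\<exists>S. finite S \<and> S \<noteq> {} \<and> (\<forall>x\<in>S. lattice_pt x) \<and> D = convex hull S)"

definition primitive :: "int \<times> int \<Rightarrow> bool" where
  "primitive v \<longleftrightarrow> v \<noteq> (0,0) \<and> gcd (fst v) (snd v) = 1"

definition pair_ip :: "real \<times> real \<Rightarrow> int \<times> int \<Rightarrow> real" where
  "pair_ip Q v = fst Q * of_int (fst v) + snd Q * of_int (snd v)"

definition lw_dir :: "(real \<times> real) set \<Rightarrow> int \<times> int \<Rightarrow> real" where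
  "lw_dir D v = (SUP Q\<in>D. pair_ip Q v) - (INF Q\<in>D. pair_ip Q v)"

definition lw :: "(real \<times> real) set \<Rightarrow> real" where
  "lw D = (INF v\<in>{v. primitive v}. lw_dir D v)"

definition remove_vertex :: "(real \<times> real) set \<Rightarrow> real \<times> real \<Rightarrow> (real \<times> real) set" where
  "remove_vertex D P = convex hull ({x\<in>D. lattice_pt x} - {P})"

definition unimod_map :: "int \<Rightarrow> int \<Rightarrow> int \<Rightarrow> int \<Rightarrow> int \<Rightarrow> int \<Rightarrow> real \<times> real \<Rightarrow> real \<times> real" where
  "unimod_map a b c e t1 t2 x =
     (of_int a * fst x + of_int b * snd x + of_int t1,
      of_int c * fst x + of_int e * snd x + of_int t2)"

definition unimod_equiv :: "(real \<times> real) set \<Rightarrow> (real \<times> real) set \<Rightarrow> bool" where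
  "unimod_equiv D D' \<longleftrightarrow>
     (\<exists>a b c e t1 t2. (a * e - b * c = 1 \<or> a * e - b * c = -1) \<and>
        unimod_map a b c e t1 t2 ` D = D')"

definition Upsilon :: "int \<Rightarrow> (real \<times> real) set" where
  "Upsilon d = convex hull {(0,0), (1, of_int d), (of_int d, 1)}"

end

theory Submission
  imports Defs
begin

text \<open>Let \<open>p\<close> be the lattice point at the vertex \<open>P\<close>. The two hypotheses on \<open>lw\<^sub>v\<close> say that, for
  \<open>u = v\<close> or \<open>u = -v\<close>, all other lattice points of \<open>\<Delta>\<close> lie on fewer than \<open>d\<close> consecutive
  \<open>u\<close>-levels (relative to \<open>p\<close>) starting at some \<open>k \<ge> 2\<close>. A lattice point \<open>Q\<close> of level \<open>k\<close> gives
  a primitive vector \<open>Q - p\<close> (a shorter lattice point on the segment would have smaller positive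
  level), which splits as \<open>U + V\<close> for a lattice basis \<open>U, V\<close> with both levels in \<open>[1, k - 1]\<close>.
  In the coordinates \<open>(s, t)\<close> of \<open>y - p\<close> with respect to \<open>U, V\<close> every other lattice point has
  \<open>s, t \<ge> 1\<close>, since otherwise \<open>p + U\<close> or \<open>p + V\<close> would lie in the triangle \<open>p, Q, y\<close> below level
  \<open>k\<close>; the level bound then gives \<open>s + t \<le> d + 1\<close>. So in these coordinates \<open>\<Delta>\<close> lies in
  \<open>conv{(0,0), (1,d), (d,1)}\<close>, and lattice width \<open>d\<close> in the two coordinate directions forces
  both \<open>(d,1)\<close> and \<open>(1,d)\<close> to be lattice points of \<open>\<Delta>\<close>.\<close>

definition of_int_pair :: "int \<times> int \<Rightarrow> real \<times> real" where
  "of_int_pair z = (of_int (fst z), of_int (snd z))"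

definition int_ip :: "int \<times> int \<Rightarrow> int \<times> int \<Rightarrow> int" where
  "int_ip z u = fst z * fst u + snd z * snd u"

definition det2 :: "int \<times> int \<Rightarrow> int \<times> int \<Rightarrow> int" where
  "det2 x y = fst x * snd y - snd x * fst y"

definition int_width :: "(int \<times> int) set \<Rightarrow> int \<times> int \<Rightarrow> int" where
  "int_width X u = Max ((\<lambda>y. int_ip y u) ` X) - Min ((\<lambda>y. int_ip y u) ` X)"

definition lattice_saturated :: "(int \<times> int) set \<Rightarrow> bool" where
  "lattice_saturated X \<longleftrightarrow> (\<forall>y. of_int_pair y \<in> convex hull (of_int_pair ` X) \<longrightarrow> y \<in> X)"

lemma of_int_pair_add: "of_int_pair (x + y) = of_int_pair x + of_int_pair y"
  by (simp add: of_int_pair_def)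

lemma of_int_pair_diff: "of_int_pair (x - y) = of_int_pair x - of_int_pair y"
  by (simp add: of_int_pair_def)

lemma of_int_pair_eq_iff [simp]: "of_int_pair x = of_int_pair y \<longleftrightarrow> x = y"
  by (simp add: of_int_pair_def prod_eq_iff)

lemma lattice_pt_iff: "lattice_pt x \<longleftrightarrow> x \<in> range of_int_pair"
proof
  assume "lattice_pt x"
  then obtain i j where "fst x = of_int i" "snd x = of_int j"
    unfolding lattice_pt_def by (auto elim!: Ints_cases)
  then have "x = of_int_pair (i, j)" by (simp add: of_int_pair_def prod_eq_iff)
  then show "x \<in> range of_int_pair" by blast
qed (auto simp: lattice_pt_def of_int_pair_def)

lemma pair_ip_eq_inner: "pair_ip x u = x \<bullet> of_int_pair u"
  by (simp add: pair_ip_def of_int_pair_def inner_prod_def)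

lemma pair_ip_of_int_pair: "pair_ip (of_int_pair z) u = of_int (int_ip z u)"
  by (simp add: pair_ip_def of_int_pair_def int_ip_def)

lemma int_ip_add: "int_ip (x + y) u = int_ip x u + int_ip y u"
  by (simp add: int_ip_def algebra_simps)

lemma int_ip_diff: "int_ip (x - y) u = int_ip x u - int_ip y u"
  by (simp add: int_ip_def algebra_simps)

lemma int_ip_uminus_right: "int_ip x (- u) = - int_ip x u"
  by (simp add: int_ip_def)

lemma SUP_inner_convex_hull:
  fixes T :: "'a::real_inner set"
  assumes "finite T" "T \<noteq> {}"
  shows "(SUP x\<in>convex hull T. x \<bullet> a) = Max ((\<lambda>x. x \<bullet> a) ` T)"
proof (rule cSup_eq_maximum)
  let ?M = "Max ((\<lambda>x. x \<bullet> a) ` T)"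
  have "?M \<in> (\<lambda>x. x \<bullet> a) ` T"
    using assms by simp
  then show "?M \<in> (\<lambda>x. x \<bullet> a) ` (convex hull T)"
    using hull_subset[of T convex] by blast
  have "convex hull T \<subseteq> {x. a \<bullet> x \<le> ?M}"
    using assms by (intro hull_minimal convex_halfspace_le) (auto simp: inner_commute intro: Max_ge)
  then show "y \<le> ?M" if "y \<in> (\<lambda>x. x \<bullet> a) ` (convex hull T)" for y
    using that by (auto simp: inner_commute)
qed

lemma INF_inner_convex_hull:
  fixes T :: "'a::real_inner set"
  assumes "finite T" "T \<noteq> {}"
  shows "(INF x\<in>convex hull T. x \<bullet> a) = Min ((\<lambda>x. x \<bullet> a) ` T)"
proof (rule cInf_eq_minimum)
  let ?m = "Min ((\<lambda>x. x \<bullet> a) ` T)"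
  have "?m \<in> (\<lambda>x. x \<bullet> a) ` T"
    using assms by simp
  then show "?m \<in> (\<lambda>x. x \<bullet> a) ` (convex hull T)"
    using hull_subset[of T convex] by blast
  have "convex hull T \<subseteq> {x. ?m \<le> a \<bullet> x}"
    using assms by (intro hull_minimal convex_halfspace_ge) (auto simp: inner_commute intro: Min_le)
  then show "?m \<le> y" if "y \<in> (\<lambda>x. x \<bullet> a) ` (convex hull T)" for y
    using that by (auto simp: inner_commute)
qed

lemma lw_dir_convex_hull_lattice:
  assumes "finite X" "X \<noteq> {}"
  shows "lw_dir (convex hull (of_int_pair ` X)) u = of_int (int_width X u)"
proof -
  have image: "(\<lambda>x. x \<bullet> of_int_pair u) ` of_int_pair ` X = of_int ` (\<lambda>y. int_ip y u) ` X"
    by (auto simp: image_image pair_ip_of_int_pair pair_ip_eq_inner[symmetric])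
  have "mono (of_int :: int \<Rightarrow> real)" by (auto intro: monoI)
  then show ?thesis
    using assms unfolding lw_dir_def pair_ip_eq_inner int_width_def
    by (simp add: SUP_inner_convex_hull INF_inner_convex_hull image
        mono_Max_commute mono_Min_commute)
qed

lemma int_width_nonneg:
  assumes "finite X" "X \<noteq> {}"
  shows "0 \<le> int_width X u"
proof -
  obtain y where "y \<in> X" using assms(2) by blast
  then have "Min ((\<lambda>y. int_ip y u) ` X) \<le> int_ip y u" "int_ip y u \<le> Max ((\<lambda>y. int_ip y u) ` X)"
    using assms(1) by simp_all
  then show ?thesis unfolding int_width_def by linarith
qed

lemma int_width_witnesses:
  assumes "finite X" "X \<noteq> {}"
  obtains y1 y2 where "y1 \<in> X" "y2 \<in> X" "int_width X u = int_ip y1 u - int_ip y2 u"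
proof -
  obtain y1 where "y1 \<in> X" "Max ((\<lambda>y. int_ip y u) ` X) = int_ip y1 u"
    using Max_in[of "(\<lambda>y. int_ip y u) ` X"] assms by (metis (no_types, lifting) empty_is_image finite_imageI imageE)
  moreover obtain y2 where "y2 \<in> X" "Min ((\<lambda>y. int_ip y u) ` X) = int_ip y2 u"
    using Min_in[of "(\<lambda>y. int_ip y u) ` X"] assms by (metis (no_types, lifting) empty_is_image finite_imageI imageE)
  ultimately show ?thesis using that unfolding int_width_def by metis
qed

lemma finite_lattice_points_bounded:
  assumes "bounded D"
  shows "finite {y. of_int_pair y \<in> D}"
proof -
  obtain B where B: "\<And>x. x \<in> D \<Longrightarrow> norm x \<le> B"
    using assms bounded_iff by blast
  define c where "c = \<lceil>B\<rceil>"
  have "y \<in> {-c..c} \<times> {-c..c}" if "of_int_pair y \<in> D" for y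
  proof -
    have "\<bar>real_of_int (fst y)\<bar> \<le> B" "\<bar>real_of_int (snd y)\<bar> \<le> B"
      using B[OF that] norm_fst_le[of "real_of_int (fst y)" "real_of_int (snd y)"]
        norm_snd_le[of "real_of_int (snd y)" "real_of_int (fst y)"]
      by (simp_all add: of_int_pair_def)
    then show ?thesis unfolding c_def mem_Times_iff by simp linarith
  qed
  then have "{y. of_int_pair y \<in> D} \<subseteq> {-c..c} \<times> {-c..c}" by blast
  then show ?thesis by (rule finite_subset) simp
qed

lemma lattice_polygon_lattice_hull:
  assumes "lattice_polygon D"
  obtains X where "finite X" "lattice_saturated X" "D = convex hull (of_int_pair ` X)"
    and "{x \<in> D. lattice_pt x} = of_int_pair ` X"
proof
  obtain S where S: "finite S" "\<forall>x\<in>S. lattice_pt x" "D = convex hull S"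
    using assms unfolding lattice_polygon_def by blast
  define X where "X = {y. of_int_pair y \<in> D}"
  show "finite X" unfolding X_def
    using S by (intro finite_lattice_points_bounded) (simp add: compact_convex_hull finite_imp_compact compact_imp_bounded)
  show lattice_points: "{x \<in> D. lattice_pt x} = of_int_pair ` X"
    by (auto simp: X_def lattice_pt_iff)
  have "S \<subseteq> of_int_pair ` X" "of_int_pair ` X \<subseteq> D"
    using S(2,3) lattice_points by (auto intro: hull_inc)
  then show hull: "D = convex hull (of_int_pair ` X)"
    using S(3) by (metis convex_convex_hull hull_minimal hull_mono subset_antisym)
  show "lattice_saturated X"
    unfolding lattice_saturated_def hull[symmetric] by (simp add: X_def)
qed

lemma lw_le_int_width:
  assumes "finite X" "X \<noteq> {}" "primitive w"
  shows "lw (convex hull (of_int_pair ` X)) \<le> of_int (int_width X w)"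
proof -
  have "lw_dir (convex hull (of_int_pair ` X)) ` {v. primitive v} \<subseteq> {0..}"
    using int_width_nonneg[OF assms(1,2)] by (auto simp: lw_dir_convex_hull_lattice assms(1,2))
  then have "lw (convex hull (of_int_pair ` X)) \<le> lw_dir (convex hull (of_int_pair ` X)) w"
    unfolding lw_def using assms(3) by (intro cINF_lower) (auto simp: bdd_below_def)
  then show ?thesis using assms(1,2) by (simp add: lw_dir_convex_hull_lattice)
qed

lemma apex_level_direction:
  assumes "finite Z" "Z \<noteq> {}" "int_width Z v < d" "int_width Z v + 1 < int_width (insert p Z) v"
  obtains u Q where "u = v \<or> u = - v" "Q \<in> Z" "2 \<le> int_ip (Q - p) u"
    and "\<forall>y\<in>Z. int_ip (Q - p) u \<le> int_ip (y - p) u \<and> int_ip (y - p) u < int_ip (Q - p) u + d"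
proof -
  define f where "f y = int_ip y v" for y
  define M where "M = Max (f ` Z)"
  define m where "m = Min (f ` Z)"
  have range: "m \<le> f y \<and> f y \<le> M" if "y \<in> Z" for y
    using assms(1) that by (simp add: M_def m_def)
  have "M \<in> f ` Z" "m \<in> f ` Z" using assms(1,2) by (simp_all add: M_def m_def)
  then obtain QM Qm where "QM \<in> Z" "f QM = M" "Qm \<in> Z" "f Qm = m" by blast
  have "int_width Z v = M - m" "int_width (insert p Z) v = max (f p) M - min (f p) m"
    using assms(1,2) by (simp_all add: int_width_def M_def m_def f_def)
  then have "M - m < d" "M - m + 1 < max (f p) M - min (f p) m"
    using assms(3,4) by simp_all
  moreover have "m \<le> M" using range[OF \<open>Qm \<in> Z\<close>] by simp
  ultimately have "f p \<le> m - 2 \<or> M + 2 \<le> f p" by linarith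
  then show ?thesis
  proof (elim disjE)
    assume "f p \<le> m - 2"
    then show ?thesis
      using that[of v Qm] \<open>Qm \<in> Z\<close> \<open>f Qm = m\<close> range \<open>M - m < d\<close>
      by (fastforce simp: f_def int_ip_diff)
  next
    assume "M + 2 \<le> f p"
    then show ?thesis
      using that[of "- v" QM] \<open>QM \<in> Z\<close> \<open>f QM = M\<close> range \<open>M - m < d\<close>
      by (fastforce simp: f_def int_ip_diff int_ip_uminus_right)
  qed
qed

lemma convex_triangle_vertex:
  fixes x a b :: "'a::real_vector"
  assumes "convex C" "x \<in> C" "x + (a + b) \<in> C" "x + (s *\<^sub>R a + t *\<^sub>R b) \<in> C"
    and "s \<le> 0" "1 \<le> t"
  shows "x + b \<in> C"
proof -
  define \<alpha> where "\<alpha> = - s / (t - s)"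
  define \<beta> where "\<beta> = 1 / (t - s)"
  have pos: "0 < t - s" using assms(5,6) by simp
  have coeffs: "0 \<le> \<alpha>" "0 \<le> \<beta>" "\<alpha> + \<beta> \<le> 1" "\<alpha> + \<beta> * s = 0" "\<alpha> + \<beta> * t = 1"
    using pos assms(5,6) unfolding \<alpha>_def \<beta>_def by (simp_all add: divide_simps)
  have "(1 - \<alpha> - \<beta>) *\<^sub>R x + \<alpha> *\<^sub>R (x + (a + b)) + \<beta> *\<^sub>R (x + (s *\<^sub>R a + t *\<^sub>R b))
      = x + ((\<alpha> + \<beta> * s) *\<^sub>R a + (\<alpha> + \<beta> * t) *\<^sub>R b)"
    by (simp add: algebra_simps)
  then have "x + b = (1 - \<alpha> - \<beta>) *\<^sub>R x + \<alpha> *\<^sub>R (x + (a + b)) + \<beta> *\<^sub>R (x + (s *\<^sub>R a + t *\<^sub>R b))"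
    using coeffs(4,5) by simp
  also have "\<dots> \<in> convex hull {x, x + (a + b), x + (s *\<^sub>R a + t *\<^sub>R b)}"
    unfolding convex_hull_3 using coeffs(1-3) by (intro CollectI exI[of _ "1 - \<alpha> - \<beta>"] exI[of _ \<alpha>] exI[of _ \<beta>]) auto
  also have "\<dots> \<subseteq> C"
    using assms(1-4) by (intro hull_minimal) auto
  finally show ?thesis .
qed

lemma det2_coordinates:
  assumes "det2 U V = 1"
  shows "of_int_pair x = of_int (det2 x V) *\<^sub>R of_int_pair U + of_int (det2 U x) *\<^sub>R of_int_pair V"
    and "int_ip x u = det2 x V * int_ip U u + det2 U x * int_ip V u"
proof -
  have "fst x = fst x * det2 U V" "snd x = snd x * det2 U V" using assms by simp_all
  then have "fst x = det2 x V * fst U + det2 U x * fst V" "snd x = det2 x V * snd U + det2 U x * snd V"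
    by (simp_all add: det2_def algebra_simps)
  then show "of_int_pair x = of_int (det2 x V) *\<^sub>R of_int_pair U + of_int (det2 U x) *\<^sub>R of_int_pair V"
    and "int_ip x u = det2 x V * int_ip U u + det2 U x * int_ip V u"
    by (simp_all add: of_int_pair_def int_ip_def prod_eq_iff algebra_simps flip: of_int_mult of_int_add)
qed

lemma gcd_eq_1_of_det2:
  assumes "det2 U V = 1"
  shows "gcd (snd V) (- fst V) = 1" "gcd (- snd U) (fst U) = 1"
proof -
  have "gcd (snd V) (- fst V) dvd det2 U V" "gcd (- snd U) (fst U) dvd det2 U V"
    by (simp_all add: det2_def dvd_diff)
  then show "gcd (snd V) (- fst V) = 1" "gcd (- snd U) (fst U) = 1"
    using assms by simp_all
qed

lemma lattice_saturatedD:
  "lattice_saturated X \<Longrightarrow> of_int_pair y \<in> convex hull (of_int_pair ` X) \<Longrightarrow> y \<in> X"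
  unfolding lattice_saturated_def by blast

lemma lattice_saturated_segment:
  assumes "lattice_saturated X" "p \<in> X" "q \<in> X" "0 \<le> c" "c \<le> 1"
    and "of_int_pair y = of_int_pair p + c *\<^sub>R (of_int_pair q - of_int_pair p)"
  shows "y \<in> X"
proof -
  have "of_int_pair y = (1 - c) *\<^sub>R of_int_pair p + c *\<^sub>R of_int_pair q"
    using assms(6) by (simp add: algebra_simps)
  also have "\<dots> \<in> convex hull (of_int_pair ` X)"
    by (rule convexD[OF convex_convex_hull]) (use assms(2-5) in \<open>auto intro: hull_inc\<close>)
  finally show ?thesis using assms(1) by (intro lattice_saturatedD)
qed

lemma lattice_saturated_triangle:
  assumes "lattice_saturated X" "p \<in> X" "p + (U + V) \<in> X" "y \<in> X"
    and "of_int_pair (y - p) = of_int s *\<^sub>R of_int_pair U + of_int t *\<^sub>R of_int_pair V"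
    and "s \<le> 0" "1 \<le> t"
  shows "p + V \<in> X"
proof -
  let ?C = "convex hull (of_int_pair ` X)"
  have "of_int_pair z \<in> ?C" if "z \<in> X" for z
    using that by (simp add: hull_inc)
  then have "of_int_pair p \<in> ?C"
    and "of_int_pair p + (of_int_pair U + of_int_pair V) \<in> ?C"
    and "of_int_pair p + (of_int s *\<^sub>R of_int_pair U + of_int t *\<^sub>R of_int_pair V) \<in> ?C"
    using assms(2-5) by (auto simp flip: of_int_pair_add assms(5))
  then have "of_int_pair p + of_int_pair V \<in> ?C"
    by (rule convex_triangle_vertex[OF convex_convex_hull]) (use assms(6,7) in simp_all)
  then show ?thesis using assms(1) by (intro lattice_saturatedD) (simp_all add: of_int_pair_add)
qed

lemma lowest_level_vector_primitive:
  assumes "lattice_saturated X" "p \<in> X" "Q \<in> X" "0 < int_ip (Q - p) u"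
    and "\<forall>y\<in>X - {p}. int_ip (Q - p) u \<le> int_ip (y - p) u"
  shows "gcd (fst (Q - p)) (snd (Q - p)) = 1"
proof (rule ccontr)
  define q where "q = Q - p"
  define g where "g = gcd (fst q) (snd q)"
  define w where "w = (fst q div g, snd q div g)"
  assume "gcd (fst (Q - p)) (snd (Q - p)) \<noteq> 1"
  then have "g \<noteq> 1" by (simp add: g_def q_def)
  have "q \<noteq> 0" using assms(4) by (auto simp: q_def int_ip_def)
  then have "g \<noteq> 0" by (auto simp: g_def prod_eq_iff)
  with \<open>g \<noteq> 1\<close> have "2 \<le> g" using gcd_ge_0_int[of "fst q" "snd q"] unfolding g_def by linarith
  have q_eq: "q = (g * fst w, g * snd w)"
    by (simp add: w_def g_def prod_eq_iff)
  then have "w \<noteq> 0" using \<open>q \<noteq> 0\<close> by (auto simp: zero_prod_def)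
  have "of_int_pair q = of_int g *\<^sub>R of_int_pair w"
    using q_eq by (simp add: of_int_pair_def)
  then have "of_int_pair (p + w) = of_int_pair p + (1 / of_int g) *\<^sub>R (of_int_pair Q - of_int_pair p)"
    using \<open>2 \<le> g\<close> by (simp add: q_def of_int_pair_add of_int_pair_diff)
  then have "p + w \<in> X"
    by (rule lattice_saturated_segment[OF assms(1-3), rotated 2]) (use \<open>2 \<le> g\<close> in simp_all)
  moreover have "p + w \<noteq> p" using \<open>w \<noteq> 0\<close> by simp
  ultimately have "int_ip q u \<le> int_ip ((p + w) - p) u"
    using assms(5) unfolding q_def by blast
  then have "int_ip q u \<le> int_ip w u" by simp
  moreover have "int_ip q u = g * int_ip w u" using q_eq by (simp add: int_ip_def algebra_simps)
  moreover have "0 < int_ip q u" using assms(4) by (simp add: q_def)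
  ultimately have "0 < int_ip w u" "g * int_ip w u \<le> 1 * int_ip w u"
    using \<open>2 \<le> g\<close> by (auto simp: zero_less_mult_iff)
  then show False using \<open>2 \<le> g\<close> by (simp add: mult_le_cancel_right)
qed

lemma primitive_vector_split:
  assumes "gcd (fst q) (snd q) = 1" "gcd (fst u) (snd u) = 1" "2 \<le> int_ip q u"
  obtains U V where "U + V = q" "det2 U V = 1" "1 \<le> int_ip U u" "1 \<le> int_ip V u"
proof -
  define k where "k = int_ip q u"
  obtain a b where "a * fst q + b * snd q = 1"
    using bezout_int[of "fst q" "snd q"] assms(1) by auto
  then have det_R: "det2 (b, - a) q = 1" by (simp add: det2_def algebra_simps)
  define r where "r = int_ip (b, - a) u"
  have "\<not> k dvd r"
  proof
    assume "k dvd r"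
    have "fst u = fst u * det2 (b, - a) q" "snd u = snd u * det2 (b, - a) q"
      using det_R by simp_all
    then have "fst u = snd q * r - (- a) * k" "snd u = b * k - fst q * r"
      by (simp_all add: r_def k_def det2_def int_ip_def algebra_simps)
    then have "k dvd fst u" "k dvd snd u" using \<open>k dvd r\<close> by simp_all
    then have "k dvd 1" using assms(2) by (metis gcd_greatest)
    then show False using assms(3) by (simp add: k_def)
  qed
  define U where "U = (b - r div k * fst q, - a - r div k * snd q)"
  have "int_ip U u = r - r div k * k"
    by (simp add: U_def r_def k_def int_ip_def algebra_simps)
  then have level_U: "int_ip U u = r mod k" by (simp add: minus_div_mult_eq_mod)
  have "0 < k" using assms(3) by (simp add: k_def)
  then have "0 \<le> r mod k" "r mod k < k" "r mod k \<noteq> 0"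
    using \<open>\<not> k dvd r\<close> by (simp_all add: dvd_eq_mod_eq_0)
  show ?thesis
  proof
    show "U + (q - U) = q" by simp
    show "det2 U (q - U) = 1"
      using det_R by (simp add: U_def det2_def algebra_simps)
    show "1 \<le> int_ip U u" "1 \<le> int_ip (q - U) u"
      using level_U \<open>0 \<le> r mod k\<close> \<open>r mod k < k\<close> \<open>r mod k \<noteq> 0\<close>
      by (simp_all add: int_ip_diff flip: k_def)
  qed
qed

lemma lattice_saturated_coordinates_pos:
  assumes "lattice_saturated X" "p \<in> X" "p + (U + V) \<in> X" "det2 U V = 1"
    and "1 \<le> int_ip U u" "1 \<le> int_ip V u"
    and lowest: "\<forall>y\<in>X - {p}. int_ip (U + V) u \<le> int_ip (y - p) u"
    and "y \<in> X" "y \<noteq> p"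
  shows "1 \<le> det2 (y - p) V \<and> 1 \<le> det2 U (y - p)"
proof -
  define s where "s = det2 (y - p) V"
  define t where "t = det2 U (y - p)"
  have coords: "of_int_pair (y - p) = of_int s *\<^sub>R of_int_pair U + of_int t *\<^sub>R of_int_pair V"
    unfolding s_def t_def by (rule det2_coordinates(1)[OF assms(4)])
  have "int_ip (U + V) u \<le> int_ip (y - p) u" using lowest assms(8,9) by blast
  then have level: "int_ip U u + int_ip V u \<le> s * int_ip U u + t * int_ip V u"
    using det2_coordinates(2)[OF assms(4), of "y - p" u] by (simp add: s_def t_def int_ip_add)
  have not_in_X: "p + W \<notin> X" if "1 \<le> int_ip W u" "int_ip W u < int_ip (U + V) u" for W
  proof
    assume "p + W \<in> X"
    moreover have "p + W \<noteq> p" using that(1) by (auto simp: int_ip_def)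
    ultimately have "int_ip (U + V) u \<le> int_ip ((p + W) - p) u" using lowest by blast
    then show False using that(2) by simp
  qed
  have "p + V \<notin> X" by (rule not_in_X) (use assms(5,6) in \<open>simp_all add: int_ip_add\<close>)
  have "p + U \<notin> X" by (rule not_in_X) (use assms(5,6) in \<open>simp_all add: int_ip_add\<close>)
  have "1 \<le> s"
  proof (rule ccontr)
    assume "\<not> 1 \<le> s"
    then have "s \<le> 0" by simp
    then have "s * int_ip U u \<le> 0" using assms(5) by (simp add: mult_nonpos_nonneg)
    then have "1 \<le> t" using level assms(5,6) by (smt (verit) mult_nonpos_nonneg)
    then have "p + V \<in> X" by (rule lattice_saturated_triangle[OF assms(1-3,8) coords \<open>s \<le> 0\<close>])
    then show False using \<open>p + V \<notin> X\<close> by contradiction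
  qed
  moreover have "1 \<le> t"
  proof (rule ccontr)
    assume "\<not> 1 \<le> t"
    then have "t \<le> 0" by simp
    then have "t * int_ip V u \<le> 0" using assms(6) by (simp add: mult_nonpos_nonneg)
    then have "1 \<le> s" using level assms(5,6) by (smt (verit) mult_nonpos_nonneg)
    moreover have "p + (V + U) \<in> X" using assms(3) by (simp add: add.commute)
    moreover have "of_int_pair (y - p) = of_int t *\<^sub>R of_int_pair V + of_int s *\<^sub>R of_int_pair U"
      using coords by simp
    ultimately have "p + U \<in> X"
      using lattice_saturated_triangle[OF assms(1,2) _ assms(8) _ \<open>t \<le> 0\<close>] by blast
    then show False using \<open>p + U \<notin> X\<close> by contradiction
  qed
  ultimately show ?thesis by (simp add: s_def t_def)
qed

lemma one_one_in_Upsilon: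
  assumes "1 \<le> d"
  shows "(1, 1) \<in> Upsilon d"
proof -
  have "d + 1 \<noteq> 0" using assms by simp
  then have "(1, 1) = ((d - 1) / (d + 1)) *\<^sub>R (0, 0) + (1 / (d + 1)) *\<^sub>R (1, real_of_int d)
      + (1 / (d + 1)) *\<^sub>R (real_of_int d, 1)"
    by (simp add: field_simps)
  then show ?thesis
    unfolding Upsilon_def convex_hull_3 using assms
    by (intro CollectI exI[of _ "(d - 1) / (d + 1)"] exI[of _ "1 / (d + 1)"]) (auto simp: field_simps)
qed

lemma of_int_pair_in_Upsilon:
  assumes "1 \<le> a" "1 \<le> b" "a + b \<le> d + 1"
  shows "of_int_pair (a, b) \<in> Upsilon d"
proof (cases "d = 1")
  case True
  then have "a = 1" "b = 1" using assms by simp_all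
  then show ?thesis using one_one_in_Upsilon[of d] \<open>d = 1\<close> by (simp add: of_int_pair_def)
next
  case False
  then have "2 \<le> d" using assms by simp
  define \<beta> where "\<beta> = (b - 1) / (d - 1)"
  define \<gamma> where "\<gamma> = (a - 1) / (d - 1)"
  have "real_of_int d - 1 \<noteq> 0" using \<open>2 \<le> d\<close> by simp
  then have "\<beta> * (d - 1) = b - 1" "\<gamma> * (d - 1) = a - 1"
    by (simp_all add: \<beta>_def \<gamma>_def)
  then have "of_int_pair (a, b) = (1 - \<beta> - \<gamma>) *\<^sub>R (1, 1) + \<beta> *\<^sub>R (1, real_of_int d) + \<gamma> *\<^sub>R (real_of_int d, 1)"
    by (simp add: of_int_pair_def algebra_simps)
  moreover have "0 \<le> \<beta>" "0 \<le> \<gamma>"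
    using assms \<open>2 \<le> d\<close> by (simp_all add: \<beta>_def \<gamma>_def)
  moreover have "\<beta> + \<gamma> = (a + b - 2) / (d - 1)"
    unfolding \<beta>_def \<gamma>_def add_divide_distrib[symmetric] by (simp add: algebra_simps)
  then have "\<beta> + \<gamma> \<le> 1"
    using assms \<open>2 \<le> d\<close> by (simp add: pos_divide_le_eq)
  ultimately have "of_int_pair (a, b) \<in> convex hull {(1, 1), (1, real_of_int d), (real_of_int d, 1)}"
    unfolding convex_hull_3 by (intro CollectI exI[of _ "1 - \<beta> - \<gamma>"] exI[of _ \<beta>] exI[of _ \<gamma>]) auto
  also have "\<dots> \<subseteq> Upsilon d"
    using one_one_in_Upsilon[of d] \<open>2 \<le> d\<close>
    by (intro hull_minimal) (auto simp: Upsilon_def hull_inc convex_convex_hull)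
  finally show ?thesis .
qed

lemma unimod_map_convex_hull:
  "unimod_map a b c e t1 t2 ` (convex hull X) = convex hull (unimod_map a b c e t1 t2 ` X)"
proof -
  define L where "L = (\<lambda>x::real \<times> real. (of_int a * fst x + of_int b * snd x, of_int c * fst x + of_int e * snd x))"
  have "linear L"
    by (rule linearI) (auto simp: L_def algebra_simps)
  moreover have affine: "unimod_map a b c e t1 t2 = (\<lambda>x. (of_int t1, of_int t2) + x) \<circ> L"
    by (rule ext) (simp add: unimod_map_def L_def)
  ultimately show ?thesis
    unfolding affine image_comp[symmetric] by (simp add: convex_hull_linear_image convex_hull_translation)
qed

lemma triangle_coordinate_vertex:
  fixes F :: "(int \<times> int) set"
  assumes "0 < d" "(0, 0) \<in> F"
    and in_triangle: "\<forall>z\<in>F - {(0, 0)}. 1 \<le> fst z \<and> 1 \<le> snd z \<and> fst z + snd z \<le> d + 1"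
    and "a \<in> F" "b \<in> F" "d \<le> fst a - fst b"
  shows "a = (d, 1)"
proof -
  have "0 \<le> fst b" using in_triangle assms(5) by (cases "b = (0, 0)") force+
  then have "a \<noteq> (0, 0)" using assms(1,6) by auto
  then have "1 \<le> snd a" "fst a + snd a \<le> d + 1" using in_triangle assms(4) by auto
  then show ?thesis using assms(6) \<open>0 \<le> fst b\<close> by (simp add: prod_eq_iff)
qed

lemma convex_hull_eq_Upsilon:
  fixes F :: "(int \<times> int) set"
  assumes "(0, 0) \<in> F" "(d, 1) \<in> F" "(1, d) \<in> F"
    and in_triangle: "\<forall>z\<in>F - {(0, 0)}. 1 \<le> fst z \<and> 1 \<le> snd z \<and> fst z + snd z \<le> d + 1"
  shows "convex hull (of_int_pair ` F) = Upsilon d"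
proof
  have "of_int_pair z \<in> Upsilon d" if "z \<in> F" for z
  proof (cases "z = (0, 0)")
    case True
    then show ?thesis by (simp add: Upsilon_def of_int_pair_def hull_inc)
  next
    case False
    then show ?thesis using in_triangle that of_int_pair_in_Upsilon[of "fst z" "snd z" d] by simp
  qed
  then show "convex hull (of_int_pair ` F) \<subseteq> Upsilon d"
    by (intro hull_minimal) (auto simp: Upsilon_def convex_convex_hull)
  have "{(0, 0), (1, real_of_int d), (real_of_int d, 1)} \<subseteq> of_int_pair ` F"
    using assms(1-3) by (force simp: of_int_pair_def)
  then show "Upsilon d \<subseteq> convex hull (of_int_pair ` F)"
    unfolding Upsilon_def by (rule hull_mono)
qed

definition lattice_coords :: "int \<times> int \<Rightarrow> int \<times> int \<Rightarrow> int \<times> int \<Rightarrow> int \<times> int \<Rightarrow> int \<times> int" where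
  "lattice_coords p U V y = (det2 (y - p) V, det2 U (y - p))"

lemma lattice_coords_self [simp]: "lattice_coords p U V p = (0, 0)"
  by (simp add: lattice_coords_def det2_def)

lemma lattice_coords_vertices:
  assumes "finite X" "p \<in> X" "det2 U V = 1" "0 < d"
    and in_triangle: "\<forall>z\<in>lattice_coords p U V ` X - {(0, 0)}. 1 \<le> fst z \<and> 1 \<le> snd z \<and> fst z + snd z \<le> d + 1"
    and width: "\<forall>w. primitive w \<longrightarrow> d \<le> int_width X w"
  shows "(d, 1) \<in> lattice_coords p U V ` X" "(1, d) \<in> lattice_coords p U V ` X"
proof -
  let ?c = "lattice_coords p U V"
  have "(0, 0) \<in> ?c ` X" using assms(2) by force
  have in_swapped: "\<forall>z\<in>prod.swap ` ?c ` X - {(0, 0)}. 1 \<le> fst z \<and> 1 \<le> snd z \<and> fst z + snd z \<le> d + 1"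
  proof
    fix z assume "z \<in> prod.swap ` ?c ` X - {(0, 0)}"
    then have "prod.swap z \<in> ?c ` X - {(0, 0)}" by auto
    then show "1 \<le> fst z \<and> 1 \<le> snd z \<and> fst z + snd z \<le> d + 1"
      using bspec[OF in_triangle \<open>prod.swap z \<in> ?c ` X - {(0, 0)}\<close>] by (simp add: add.commute)
  qed
  have "X \<noteq> {}" using assms(2) by auto
  have "primitive (snd V, - fst V)" "primitive (- snd U, fst U)"
    using gcd_eq_1_of_det2[OF assms(3)] by (auto simp: primitive_def)
  txt \<open>These two directions measure the first and the second coordinate, respectively.\<close>
  obtain y1 y2 where "y1 \<in> X" "y2 \<in> X" "d \<le> int_ip y1 (snd V, - fst V) - int_ip y2 (snd V, - fst V)"
    using width \<open>primitive (snd V, - fst V)\<close> int_width_witnesses[OF assms(1) \<open>X \<noteq> {}\<close>] by metis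
  then have "?c y1 = (d, 1)"
    using triangle_coordinate_vertex[OF assms(4) \<open>(0, 0) \<in> ?c ` X\<close> in_triangle, of "?c y1" "?c y2"]
    by (simp add: lattice_coords_def det2_def int_ip_def algebra_simps)
  then show "(d, 1) \<in> ?c ` X" using \<open>y1 \<in> X\<close> by force
  obtain y3 y4 where "y3 \<in> X" "y4 \<in> X" "d \<le> int_ip y3 (- snd U, fst U) - int_ip y4 (- snd U, fst U)"
    using width \<open>primitive (- snd U, fst U)\<close> int_width_witnesses[OF assms(1) \<open>X \<noteq> {}\<close>] by metis
  then have "prod.swap (?c y3) = (d, 1)"
    using triangle_coordinate_vertex[OF assms(4) _ in_swapped, of "prod.swap (?c y3)" "prod.swap (?c y4)"]
      \<open>(0, 0) \<in> ?c ` X\<close>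
    by (force simp: lattice_coords_def det2_def int_ip_def algebra_simps)
  then have "?c y3 = (1, d)" by (metis swap_simp swap_swap)
  then show "(1, d) \<in> ?c ` X" using \<open>y3 \<in> X\<close> by force
qed

lemma unimod_equiv_Upsilon_of_coordinates:
  assumes "finite X" "p \<in> X" "det2 U V = 1" "0 < d"
    and coords: "\<forall>y\<in>X - {p}. 1 \<le> det2 (y - p) V \<and> 1 \<le> det2 U (y - p)
                   \<and> det2 (y - p) V + det2 U (y - p) \<le> d + 1"
    and width: "\<forall>w. primitive w \<longrightarrow> d \<le> int_width X w"
  shows "unimod_equiv (convex hull (of_int_pair ` X)) (Upsilon d)"
proof -
  define F where "F = lattice_coords p U V ` X"
  have "(0, 0) \<in> F" using assms(2) by (force simp: F_def)
  have in_triangle: "\<forall>z\<in>F - {(0, 0)}. 1 \<le> fst z \<and> 1 \<le> snd z \<and> fst z + snd z \<le> d + 1"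
  proof
    fix z assume "z \<in> F - {(0, 0)}"
    then obtain y where y: "y \<in> X" "z = lattice_coords p U V y" "z \<noteq> (0, 0)"
      by (auto simp: F_def)
    then have "y \<in> X - {p}" by auto
    then show "1 \<le> fst z \<and> 1 \<le> snd z \<and> fst z + snd z \<le> d + 1"
      using coords y(2) by (simp add: lattice_coords_def)
  qed
  define T where "T = unimod_map (snd V) (- fst V) (- snd U) (fst U) (- det2 p V) (- det2 U p)"
  have T_coords: "T (of_int_pair y) = of_int_pair (lattice_coords p U V y)" for y
    by (simp add: T_def unimod_map_def of_int_pair_def lattice_coords_def det2_def algebra_simps)
  have "T ` (convex hull (of_int_pair ` X)) = convex hull (T ` of_int_pair ` X)"
    unfolding T_def by (rule unimod_map_convex_hull)
  also have "T ` of_int_pair ` X = of_int_pair ` F"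
    by (simp add: F_def image_image T_coords)
  also have "convex hull (of_int_pair ` F) = Upsilon d"
    using \<open>(0, 0) \<in> F\<close> lattice_coords_vertices[OF assms(1-4) _ width] in_triangle
    by (intro convex_hull_eq_Upsilon) (simp_all add: F_def)
  finally have "T ` (convex hull (of_int_pair ` X)) = Upsilon d" .
  moreover have "snd V * fst U - (- fst V) * (- snd U) = 1"
    using assms(3) by (simp add: det2_def algebra_simps)
  ultimately show ?thesis unfolding unimod_equiv_def T_def by blast
qed

lemma unimod_equiv_Upsilon_of_apex:
  assumes "finite X" "lattice_saturated X" "p \<in> X" "gcd (fst u) (snd u) = 1" "0 < d"
    and "Q \<in> X" "2 \<le> int_ip (Q - p) u"
    and levels: "\<forall>y\<in>X - {p}. int_ip (Q - p) u \<le> int_ip (y - p) u \<and> int_ip (y - p) u < int_ip (Q - p) u + d"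
    and width: "\<forall>w. primitive w \<longrightarrow> d \<le> int_width X w"
  shows "unimod_equiv (convex hull (of_int_pair ` X)) (Upsilon d)"
proof -
  have "gcd (fst (Q - p)) (snd (Q - p)) = 1"
    using assms(2,3,6,7) levels by (intro lowest_level_vector_primitive) auto
  then obtain U V where UV: "U + V = Q - p" "det2 U V = 1" "1 \<le> int_ip U u" "1 \<le> int_ip V u"
    using primitive_vector_split assms(4,7) by metis
  have "p + (U + V) \<in> X" using UV(1) assms(6) by simp
  have "1 \<le> det2 (y - p) V \<and> 1 \<le> det2 U (y - p) \<and> det2 (y - p) V + det2 U (y - p) \<le> d + 1"
    if "y \<in> X - {p}" for y
  proof -
    define s where "s = det2 (y - p) V"
    define t where "t = det2 U (y - p)"
    have "1 \<le> s" "1 \<le> t"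
      using lattice_saturated_coordinates_pos[OF assms(2,3) \<open>p + (U + V) \<in> X\<close> UV(2-4)] levels that
      by (auto simp: s_def t_def UV(1))
    have "int_ip (y - p) u < int_ip (Q - p) u + d" using levels that by blast
    then have "s * int_ip U u + t * int_ip V u < int_ip U u + int_ip V u + d"
      using det2_coordinates(2)[OF UV(2), of "y - p" u]
      by (simp add: s_def t_def int_ip_add flip: UV(1))
    moreover have "(s - 1) * 1 \<le> (s - 1) * int_ip U u" "(t - 1) * 1 \<le> (t - 1) * int_ip V u"
      using \<open>1 \<le> s\<close> \<open>1 \<le> t\<close> UV(3,4) by (intro mult_left_mono; simp)+
    ultimately have "s + t \<le> d + 1" by (simp add: algebra_simps)
    then show ?thesis using \<open>1 \<le> s\<close> \<open>1 \<le> t\<close> by (simp add: s_def t_def)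
  qed
  then show ?thesis
    using unimod_equiv_Upsilon_of_coordinates[OF assms(1,3) UV(2) assms(5) _ width] by blast
qed

theorem lemma2p2:
  fixes D :: "(real \<times> real) set" and d :: int and P :: "real \<times> real" and v :: "int \<times> int"
  assumes "lattice_polygon D"
    and "lw D = of_int d" and "d > 0"
    and "P extreme_point_of D"
    and "primitive v"
    and "lw_dir (remove_vertex D P) v < of_int d"
    and "lw_dir (remove_vertex D P) v < lw_dir D v - 1"
  shows "unimod_equiv D (Upsilon d)"
proof -
  obtain X where X: "finite X" "lattice_saturated X" "D = convex hull (of_int_pair ` X)"
    and lattice_points: "{x \<in> D. lattice_pt x} = of_int_pair ` X"
    using lattice_polygon_lattice_hull[OF assms(1)] by blast
  obtain p where "p \<in> X" "P = of_int_pair p"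
    using assms(4) extreme_point_of_convex_hull X(3) by blast
  then have "X \<noteq> {}" "insert p (X - {p}) = X" by auto
  have width: "\<forall>w. primitive w \<longrightarrow> d \<le> int_width X w"
    using lw_le_int_width[OF X(1) \<open>X \<noteq> {}\<close>] assms(2) X(3) by force
  have "X - {p} \<noteq> {}"
  proof
    assume "X - {p} = {}"
    then have "X = {p}" using \<open>p \<in> X\<close> by auto
    then show False using width[rule_format, of "(1, 0)"] assms(3) by (simp add: primitive_def int_width_def)
  qed
  moreover have "remove_vertex D P = convex hull (of_int_pair ` (X - {p}))"
    unfolding remove_vertex_def lattice_points \<open>P = of_int_pair p\<close> by (simp add: image_set_diff inj_on_def)
  ultimately have "int_width (X - {p}) v < d" "int_width (X - {p}) v + 1 < int_width (insert p (X - {p})) v"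
    using assms(6,7) X(1,3) \<open>X \<noteq> {}\<close> \<open>insert p (X - {p}) = X\<close>
    by (simp_all add: lw_dir_convex_hull_lattice)
  then obtain u Q where u: "u = v \<or> u = - v" and "Q \<in> X - {p}" "2 \<le> int_ip (Q - p) u"
    and levels: "\<forall>y\<in>X - {p}. int_ip (Q - p) u \<le> int_ip (y - p) u \<and> int_ip (y - p) u < int_ip (Q - p) u + d"
    by (rule apex_level_direction[OF finite_Diff[OF X(1)] \<open>X - {p} \<noteq> {}\<close>])
  moreover have "gcd (fst u) (snd u) = 1"
    using assms(5) u by (auto simp: primitive_def)
  ultimately show ?thesis
    unfolding X(3) by (intro unimod_equiv_Upsilon_of_apex[OF X(1,2) \<open>p \<in> X\<close> _ assms(3) _ _ levels width]) auto
qed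

end
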